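(* Let $f\in\mathbf{C}\{X,Y\}$ be a nonzero power series without constant term such that the curve $f=0$ is reduced, and let $l\in\mathbf{C}\{X,Y\}$ be a power series without constant term with $\operatorname{ord} l=1$. Let $J(f,l)=\frac{\partial f}{\partial X}\frac{\partial l}{\partial Y}-\frac{\partial f}{\partial Y}\frac{\partial l}{\partial X}$ and assume $J(f,l)(0,0)=0$. If the curves $l=0$ and $f=0$ are transverse, then the curves $l=0$ and $J(f,l)=0$ are transverse.
   Context: $\mathbf{C}\{X,Y\}$ is the ring of convergent complex power series. For a nonzero series $g=\sum c_{\alpha\beta}X^\alpha Y^\beta$, $\operatorname{ord} g=\min\{\alpha+\beta: c_{\alpha\beta}\neq 0\}$ and the initial form of $g$ is $\sum_{\alpha+\beta=\operatorname{ord} g}c_{\alpha\beta}X^\alpha Y^\beta$; the tangents to $g=0$ are the lines given by the linear factors of the initial form. Two curves are transverse if they have no common tangent. A curve $f=0$ is reduced if $f$ has no multiple irreducible factors. *)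

theory Defs
  imports "HOL-Analysis.Analysis"
begin

text \<open>A formal power series in X, Y over C is represented by its coefficient
  function: g a b is the coefficient of X^a Y^b.\<close>
type_synonym ps2 = "nat \<Rightarrow> nat \<Rightarrow> complex"

definition convergent_ps :: "ps2 \<Rightarrow> bool" where
  "convergent_ps g \<longleftrightarrow>
     (\<exists>r::real. r > 0 \<and> (\<lambda>(a,b). norm (g a b) * r ^ (a + b)) summable_on (UNIV :: (nat \<times> nat) set))"

definition ps_zero :: ps2 where "ps_zero = (\<lambda>a b. 0)"
definition ps_one :: ps2 where "ps_one = (\<lambda>a b. if a = 0 \<and> b = 0 then 1 else 0)"
definition ps_add :: "ps2 \<Rightarrow> ps2 \<Rightarrow> ps2" where "ps_add f g = (\<lambda>a b. f a b + g a b)"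
definition ps_sub :: "ps2 \<Rightarrow> ps2 \<Rightarrow> ps2" where "ps_sub f g = (\<lambda>a b. f a b - g a b)"

definition ps_mul :: "ps2 \<Rightarrow> ps2 \<Rightarrow> ps2" where
  "ps_mul f g = (\<lambda>a b. \<Sum>i\<le>a. \<Sum>j\<le>b. f i j * g (a - i) (b - j))"

definition ps_dX :: "ps2 \<Rightarrow> ps2" where "ps_dX f = (\<lambda>a b. of_nat (Suc a) * f (Suc a) b)"
definition ps_dY :: "ps2 \<Rightarrow> ps2" where "ps_dY f = (\<lambda>a b. of_nat (Suc b) * f a (Suc b))"

definition jac :: "ps2 \<Rightarrow> ps2 \<Rightarrow> ps2" where
  "jac f l = ps_sub (ps_mul (ps_dX f) (ps_dY l)) (ps_mul (ps_dY f) (ps_dX l))"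

definition cdvd :: "ps2 \<Rightarrow> ps2 \<Rightarrow> bool" where
  "cdvd p f \<longleftrightarrow> (\<exists>q. convergent_ps q \<and> f = ps_mul p q)"

definition cunit :: "ps2 \<Rightarrow> bool" where
  "cunit u \<longleftrightarrow> convergent_ps u \<and> cdvd u ps_one"

definition cirreducible :: "ps2 \<Rightarrow> bool" where
  "cirreducible p \<longleftrightarrow> convergent_ps p \<and> p \<noteq> ps_zero \<and> \<not> cunit p \<and>
     (\<forall>a b. convergent_ps a \<and> convergent_ps b \<and> p = ps_mul a b \<longrightarrow> cunit a \<or> cunit b)"

definition reduced_ps :: "ps2 \<Rightarrow> bool" where
  "reduced_ps f \<longleftrightarrow> \<not> (\<exists>p. cirreducible p \<and> cdvd (ps_mul p p) f)"

definition ps_ord :: "ps2 \<Rightarrow> nat" where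
  "ps_ord g = (LEAST d. \<exists>a b. a + b = d \<and> g a b \<noteq> 0)"

definition initial_form :: "ps2 \<Rightarrow> ps2" where
  "initial_form g = (\<lambda>a b. if a + b = ps_ord g then g a b else 0)"

definition lin_form :: "complex \<Rightarrow> complex \<Rightarrow> ps2" where
  "lin_form \<alpha> \<beta> = (\<lambda>a b. if a = 1 \<and> b = 0 then \<alpha> else if a = 0 \<and> b = 1 then \<beta> else 0)"

definition is_tangent :: "ps2 \<Rightarrow> complex \<Rightarrow> complex \<Rightarrow> bool" where
  "is_tangent g \<alpha> \<beta> \<longleftrightarrow> g \<noteq> ps_zero \<and> (\<alpha>, \<beta>) \<noteq> (0, 0) \<and>
     (\<exists>h. (\<forall>a b. a + b \<noteq> ps_ord g - 1 \<longrightarrow> h a b = 0) \<and>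
          initial_form g = ps_mul (lin_form \<alpha> \<beta>) h)"

definition transverse :: "ps2 \<Rightarrow> ps2 \<Rightarrow> bool" where
  "transverse f g \<longleftrightarrow> \<not> (\<exists>\<alpha> \<beta>. is_tangent f \<alpha> \<beta> \<and> is_tangent g \<alpha> \<beta>)"

end

theory Submission imports Defs "HOL-Computational_Algebra.Polynomial" begin

text \<open>Write \<open>\<alpha>X + \<beta>Y\<close> for a tangent of \<open>l = 0\<close>, so that the linear part of \<open>l\<close> is
  \<open>c(\<alpha>X + \<beta>Y)\<close> with \<open>c \<noteq> 0\<close>. A linear form \<open>\<alpha>X + \<beta>Y\<close> divides a form exactly when the form
  vanishes at the point \<open>(\<beta>, -\<alpha>)\<close>. If \<open>f\<close> has order \<open>n \<ge> 1\<close> with initial form \<open>f\<^sub>n\<close>, the terms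
  of \<open>J(f,l)\<close> of degree less than \<open>n - 1\<close> vanish, and its part of degree \<open>n - 1\<close> is the
  directional derivative \<open>c(\<beta> \<partial>\<^sub>X - \<alpha> \<partial>\<^sub>Y) f\<^sub>n\<close>. By Euler's identity this form takes the value
  \<open>c n f\<^sub>n(\<beta>, -\<alpha>)\<close> at \<open>(\<beta>, -\<alpha>)\<close>, which is nonzero by transversality of \<open>l\<close> and \<open>f\<close>. Hence
  \<open>J(f,l)\<close> has order \<open>n - 1\<close> and \<open>\<alpha>X + \<beta>Y\<close> does not divide its initial form.\<close>

definition homogeneous_ps :: "nat \<Rightarrow> ps2 \<Rightarrow> bool" where
  "homogeneous_ps d g \<longleftrightarrow> (\<forall>a b. a + b \<noteq> d \<longrightarrow> g a b = 0)"

definition homog_eval :: "nat \<Rightarrow> ps2 \<Rightarrow> complex \<Rightarrow> complex \<Rightarrow> complex" where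
  "homog_eval d g x y = (\<Sum>i\<le>d. g i (d - i) * x ^ i * y ^ (d - i))"

lemma sum_atMost_delta_pair:
  "(\<Sum>i'\<le>(i::nat). \<Sum>j'\<le>(j::nat). if i' = a \<and> j' = b then c else 0) =
     (if a \<le> i \<and> b \<le> j then c else 0)"
proof -
  have "(\<Sum>j'\<le>j. if i' = a \<and> j' = b then c else 0) = (if i' = a then (if b \<le> j then c else 0) else 0)" for i'
    by (cases "i' = a") (simp_all add: sum.delta')
  then show ?thesis by (simp add: sum.delta)
qed

lemma ps_ord_nonzero_coeff:
  assumes "g \<noteq> ps_zero"
  obtains a b where "a + b = ps_ord g" "g a b \<noteq> 0"
proof -
  from assms obtain a0 b0 where "g a0 b0 \<noteq> 0" by (auto simp: ps_zero_def fun_eq_iff)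
  then have "\<exists>d a b. a + b = d \<and> g a b \<noteq> 0" by blast
  from LeastI_ex[OF this] show ?thesis using that unfolding ps_ord_def by blast
qed

lemma coeff_below_ps_ord: "a + b < ps_ord g \<Longrightarrow> g a b = 0"
  unfolding ps_ord_def using not_less_Least by blast

lemma ps_ord_eqI:
  assumes "g a b \<noteq> 0" "a + b = d" "\<And>a b. a + b < d \<Longrightarrow> g a b = 0"
  shows "ps_ord g = d"
  unfolding ps_ord_def
proof (rule Least_equality)
  show "\<exists>a' b'. a' + b' = d \<and> g a' b' \<noteq> 0" using assms by blast
  show "d \<le> e" if "\<exists>a b. a + b = e \<and> g a b \<noteq> 0" for e
    using that assms(3) by (metis not_le)
qed

lemma ps_ord_eq_homog_eval:
  assumes "homog_eval d g x y \<noteq> 0" "\<And>a b. a + b < d \<Longrightarrow> g a b = 0"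
  shows "ps_ord g = d"
proof -
  from assms(1) obtain i where "i \<le> d" "g i (d - i) \<noteq> 0"
    unfolding homog_eval_def by (metis (no_types, lifting) atMost_iff mult_eq_0_iff sum.neutral)
  then show ?thesis by (intro ps_ord_eqI[of g i "d - i"] assms(2)) auto
qed

lemma homog_eval_initial_form:
  "homog_eval (ps_ord g) (initial_form g) x y = homog_eval (ps_ord g) g x y"
  unfolding homog_eval_def initial_form_def by (intro sum.cong refl) auto

lemma ps_mul_coeff_below_order:
  assumes f_low: "\<And>a b. a + b < d \<Longrightarrow> f a b = 0" and "i + j \<le> d"
  shows "ps_mul f g i j = (if i + j = d then f i j * g 0 0 else 0)"
proof -
  have "f i' j' * g (i - i') (j - j') =
      (if i' = i \<and> j' = j then (if i + j = d then f i j * g 0 0 else 0) else 0)"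
    if "i' \<le> i" "j' \<le> j" for i' j'
    using that \<open>i + j \<le> d\<close> f_low[of i' j'] by auto
  then have "ps_mul f g i j = (\<Sum>i'\<le>i. \<Sum>j'\<le>j.
      if i' = i \<and> j' = j then (if i + j = d then f i j * g 0 0 else 0) else 0)"
    unfolding ps_mul_def by (intro sum.cong refl) simp
  then show ?thesis by (simp only: sum_atMost_delta_pair) simp
qed

lemma ps_mul_lin_form:
  "ps_mul (lin_form \<alpha> \<beta>) h i j =
     (if 1 \<le> i then \<alpha> * h (i - 1) j else 0) + (if 1 \<le> j then \<beta> * h i (j - 1) else 0)"
proof -
  have summand: "lin_form \<alpha> \<beta> i' j' * h (i - i') (j - j') =
     (if i' = 1 \<and> j' = 0 then \<alpha> * h (i - 1) j else 0) +
     (if i' = 0 \<and> j' = 1 then \<beta> * h i (j - 1) else 0)" for i' j'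
    by (auto simp: lin_form_def)
  show ?thesis unfolding ps_mul_def summand sum.distrib sum_atMost_delta_pair by simp
qed

lemma homog_eval_lin_form_mult:
  "homog_eval (Suc m) (ps_mul (lin_form \<alpha> \<beta>) h) x y = (\<alpha> * x + \<beta> * y) * homog_eval m h x y"
proof -
  have "homog_eval (Suc m) (ps_mul (lin_form \<alpha> \<beta>) h) x y =
     (\<Sum>i\<le>Suc m. if 1 \<le> i then \<alpha> * h (i - 1) (Suc m - i) * x ^ i * y ^ (Suc m - i) else 0) +
     (\<Sum>i\<le>Suc m. if 1 \<le> Suc m - i then \<beta> * h i (Suc m - i - 1) * x ^ i * y ^ (Suc m - i) else 0)"
    unfolding homog_eval_def ps_mul_lin_form sum.distrib[symmetric]
    by (intro sum.cong) (auto simp: algebra_simps)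
  also have "(\<Sum>i\<le>Suc m. if 1 \<le> i then \<alpha> * h (i - 1) (Suc m - i) * x ^ i * y ^ (Suc m - i) else 0)
      = \<alpha> * x * homog_eval m h x y"
    unfolding sum.atMost_Suc_shift homog_eval_def by (simp add: sum_distrib_left algebra_simps)
  also have "(\<Sum>i\<le>Suc m. if 1 \<le> Suc m - i then \<beta> * h i (Suc m - i - 1) * x ^ i * y ^ (Suc m - i) else 0)
      = \<beta> * y * homog_eval m h x y"
    unfolding sum.atMost_Suc homog_eval_def sum_distrib_left
    by (simp, intro sum.cong refl) (auto simp: Suc_diff_le algebra_simps)
  finally show ?thesis by (simp add: algebra_simps)
qed

lemma homog_eval_lin_form_mult_root:
  "homog_eval d (ps_mul (lin_form \<alpha> \<beta>) h) \<beta> (-\<alpha>) = 0"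
proof (cases d)
  case 0
  then show ?thesis by (simp add: homog_eval_def ps_mul_lin_form)
next
  case (Suc m)
  then show ?thesis by (simp only: homog_eval_lin_form_mult) simp
qed

lemma lin_form_factor_of_root_Y:
  assumes "\<beta> \<noteq> 0" "homogeneous_ps (Suc m) P" "homog_eval (Suc m) P \<beta> 0 = 0"
  shows "\<exists>h. homogeneous_ps m h \<and> P = ps_mul (lin_form 0 \<beta>) h"
proof -
  have "(\<Sum>i\<le>m. P i (Suc m - i) * \<beta> ^ i * 0 ^ (Suc m - i)) = 0"
    by (rule sum.neutral) auto
  then have "homog_eval (Suc m) P \<beta> 0 = P (Suc m) 0 * \<beta> ^ Suc m"
    unfolding homog_eval_def sum.atMost_Suc by simp
  then have P_corner: "P (Suc m) 0 = 0" using assms(1,3) by simp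
  define h where "h = (\<lambda>i j. P i (Suc j) / \<beta>)"
  have "P i j = ps_mul (lin_form 0 \<beta>) h i j" for i j
    using P_corner assms(1,2)
    by (cases j; cases "i = Suc m") (auto simp: ps_mul_lin_form h_def homogeneous_ps_def)
  moreover have "homogeneous_ps m h" using assms(2) by (simp add: h_def homogeneous_ps_def)
  ultimately show ?thesis by blast
qed

text \<open>For \<open>\<alpha> \<noteq> 0\<close> the form is dehomogenised to the polynomial \<open>\<Sum>\<^sub>k P\<^sub>k\<^sub>,\<^sub>d\<^sub>-\<^sub>k t\<^sup>k\<close>, which has the
  root \<open>-\<beta>/\<alpha>\<close>; the cofactor of \<open>t + \<beta>/\<alpha>\<close> is rehomogenised.\<close>
lemma lin_form_factor_of_root_X:
  assumes "\<alpha> \<noteq> 0" "homogeneous_ps (Suc m) P" "homog_eval (Suc m) P \<beta> (-\<alpha>) = 0"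
  shows "\<exists>h. homogeneous_ps m h \<and> P = ps_mul (lin_form \<alpha> \<beta>) h"
proof -
  define p where "p = (\<Sum>k\<le>Suc m. monom (P k (Suc m - k)) k)"
  have coeff_p: "coeff p k = (if k \<le> Suc m then P k (Suc m - k) else 0)" for k
    by (simp add: p_def coeff_sum coeff_monom)
  have "homog_eval (Suc m) P \<beta> (-\<alpha>) = (-\<alpha>) ^ Suc m * poly p (-\<beta> / \<alpha>)"
    unfolding homog_eval_def p_def poly_sum poly_monom sum_distrib_left
  proof (intro sum.cong refl)
    fix k assume "k \<in> {..Suc m}"
    then have "(-\<alpha>) ^ Suc m = (-\<alpha>) ^ k * (-\<alpha>) ^ (Suc m - k)"
      by (simp add: power_add[symmetric])
    moreover have "(-\<beta> / \<alpha>) ^ k = \<beta> ^ k / (-\<alpha>) ^ k"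
      by (simp add: power_divide[symmetric])
    ultimately show "P k (Suc m - k) * \<beta> ^ k * (- \<alpha>) ^ (Suc m - k) =
         (- \<alpha>) ^ Suc m * (P k (Suc m - k) * (- \<beta> / \<alpha>) ^ k)"
      using \<open>\<alpha> \<noteq> 0\<close> by (simp add: field_simps)
  qed
  then have "poly p (-\<beta> / \<alpha>) = 0" using assms(1,3) by simp
  then have "[:\<beta> / \<alpha>, 1:] dvd p" using poly_eq_0_iff_dvd[of p "-\<beta> / \<alpha>"] by simp
  then obtain q where pq: "p = [:\<beta> / \<alpha>, 1:] * q" by (elim dvdE)
  have "degree q \<le> m"
  proof (cases "q = 0")
    case False
    have "degree p \<le> Suc m" by (rule degree_le) (simp add: coeff_p)
    moreover have "degree p = 1 + degree q" unfolding pq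
      by (subst degree_mult_eq) (use False in auto)
    ultimately show ?thesis by simp
  qed simp
  then have q_top: "coeff q (Suc m) = 0" by (simp add: coeff_eq_0)
  define h where "h = (\<lambda>i j. if i + j = m then coeff q i / \<alpha> else 0)"
  have "P i j = ps_mul (lin_form \<alpha> \<beta>) h i j" for i j
  proof (cases "i + j = Suc m")
    case True
    then have "P i j = coeff p i" by (simp add: coeff_p flip: True)
    also have "\<dots> = \<beta> / \<alpha> * coeff q i + (if i = 0 then 0 else coeff q (i - 1))"
      unfolding pq by (cases i) (simp_all add: mult_pCons_left)
    also have "\<dots> = ps_mul (lin_form \<alpha> \<beta>) h i j"
      using True q_top \<open>\<alpha> \<noteq> 0\<close> by (cases j) (auto simp: ps_mul_lin_form h_def)
    finally show ?thesis .
  qed (use assms(2) in \<open>auto simp: ps_mul_lin_form h_def homogeneous_ps_def\<close>)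
  moreover have "homogeneous_ps m h" by (simp add: h_def homogeneous_ps_def)
  ultimately show ?thesis by blast
qed

lemma lin_form_factor_of_root:
  assumes "(\<alpha>, \<beta>) \<noteq> (0, 0)" "homogeneous_ps (Suc m) P" "homog_eval (Suc m) P \<beta> (-\<alpha>) = 0"
  shows "\<exists>h. homogeneous_ps m h \<and> P = ps_mul (lin_form \<alpha> \<beta>) h"
  using assms lin_form_factor_of_root_X lin_form_factor_of_root_Y[of \<beta> m P]
  by (cases "\<alpha> = 0") auto

text \<open>For \<open>ps_ord g = 0\<close> the cofactor degree \<open>ps_ord g - 1\<close> in \<open>is_tangent\<close> truncates to \<open>0\<close>;
  both sides are then false.\<close>
lemma is_tangent_iff_homog_eval:
  "is_tangent g \<alpha> \<beta> \<longleftrightarrow>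
     g \<noteq> ps_zero \<and> (\<alpha>, \<beta>) \<noteq> (0, 0) \<and> homog_eval (ps_ord g) g \<beta> (-\<alpha>) = 0"
proof
  assume "is_tangent g \<alpha> \<beta>"
  then show "g \<noteq> ps_zero \<and> (\<alpha>, \<beta>) \<noteq> (0, 0) \<and> homog_eval (ps_ord g) g \<beta> (-\<alpha>) = 0"
    unfolding is_tangent_def
    by (metis homog_eval_initial_form homog_eval_lin_form_mult_root)
next
  assume g: "g \<noteq> ps_zero \<and> (\<alpha>, \<beta>) \<noteq> (0, 0) \<and> homog_eval (ps_ord g) g \<beta> (-\<alpha>) = 0"
  show "is_tangent g \<alpha> \<beta>"
  proof (cases "ps_ord g")
    case 0
    obtain a b where "a + b = ps_ord g" "g a b \<noteq> 0" using g ps_ord_nonzero_coeff by blast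
    with 0 g show ?thesis by (simp add: homog_eval_def)
  next
    case (Suc m)
    have "homogeneous_ps (Suc m) (initial_form g)"
      by (simp add: homogeneous_ps_def initial_form_def Suc)
    moreover have "homog_eval (Suc m) (initial_form g) \<beta> (-\<alpha>) = 0"
      using g homog_eval_initial_form[of g] by (simp add: Suc)
    ultimately show ?thesis
      using g lin_form_factor_of_root[of \<alpha> \<beta> m "initial_form g"]
      unfolding is_tangent_def homogeneous_ps_def Suc by auto
  qed
qed

lemma tangent_of_order_one:
  assumes "is_tangent l \<alpha> \<beta>" "ps_ord l = 1"
  obtains c where "c \<noteq> 0" "l 1 0 = c * \<alpha>" "l 0 1 = c * \<beta>"
proof -
  from assms(1) obtain h where lin: "initial_form l = ps_mul (lin_form \<alpha> \<beta>) h"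
    unfolding is_tangent_def by blast
  have "l 1 0 = h 0 0 * \<alpha>" "l 0 1 = h 0 0 * \<beta>"
    using fun_cong[OF fun_cong[OF lin, of 1], of 0] fun_cong[OF fun_cong[OF lin, of 0], of 1] assms(2)
    by (simp_all add: initial_form_def ps_mul_lin_form mult.commute)
  moreover have "l 1 0 \<noteq> 0 \<or> l 0 1 \<noteq> 0"
  proof -
    obtain a b where "a + b = 1" "l a b \<noteq> 0"
      using assms ps_ord_nonzero_coeff unfolding is_tangent_def by metis
    then show ?thesis by (cases a) auto
  qed
  ultimately show ?thesis using that by auto
qed

lemma homog_eval_euler:
  "homog_eval m (\<lambda>i j. x * ps_dX f i j + y * ps_dY f i j) x y =
     of_nat (Suc m) * homog_eval (Suc m) f x y"
proof -
  define F where "F k = f k (Suc m - k) * x ^ k * y ^ (Suc m - k)" for k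
  have X_part: "(\<Sum>i\<le>m. x * ps_dX f i (m - i) * x ^ i * y ^ (m - i)) = (\<Sum>k\<le>Suc m. of_nat k * F k)"
    unfolding sum.atMost_Suc_shift F_def by (simp add: ps_dX_def algebra_simps)
  have Y_part: "(\<Sum>i\<le>m. y * ps_dY f i (m - i) * x ^ i * y ^ (m - i)) =
      (\<Sum>k\<le>Suc m. of_nat (Suc m - k) * F k)"
    unfolding sum.atMost_Suc F_def
    by (simp, intro sum.cong refl) (simp add: ps_dY_def Suc_diff_le algebra_simps)
  have "(\<Sum>k\<le>Suc m. of_nat k * F k) + (\<Sum>k\<le>Suc m. of_nat (Suc m - k) * F k) =
      of_nat (Suc m) * (\<Sum>k\<le>Suc m. F k)"
    unfolding sum.distrib[symmetric] sum_distrib_left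
    by (intro sum.cong refl) (simp flip: distrib_right of_nat_add)
  then show ?thesis
    unfolding homog_eval_def F_def[symmetric] X_part[symmetric] Y_part[symmetric]
      sum.distrib[symmetric]
    by (simp add: F_def algebra_simps)
qed

lemma jac_coeff_below_order:
  assumes f_low: "\<And>a b. a + b < Suc m \<Longrightarrow> f a b = 0" and "i + j \<le> m"
  shows "jac f l i j =
    (if i + j = m then l 0 1 * ps_dX f i j - l 1 0 * ps_dY f i j else 0)"
proof -
  have "ps_dX f a b = 0" "ps_dY f a b = 0" if "a + b < m" for a b
    using that f_low by (simp_all add: ps_dX_def ps_dY_def)
  then show ?thesis
    unfolding jac_def ps_sub_def
    using ps_mul_coeff_below_order[of m "ps_dX f" i j] ps_mul_coeff_below_order[of m "ps_dY f" i j]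
      \<open>i + j \<le> m\<close>
    by (simp add: ps_dX_def ps_dY_def algebra_simps)
qed

theorem mainTheorem2:
  fixes f l :: ps2
  assumes "convergent_ps f" and "f \<noteq> ps_zero" and "f 0 0 = 0"
    and "reduced_ps f"
    and "convergent_ps l" and "l \<noteq> ps_zero" and "l 0 0 = 0" and "ps_ord l = 1"
    and "jac f l 0 0 = 0"
    and "transverse l f"
  shows "transverse l (jac f l)"
proof -
  have "\<not> (is_tangent l \<alpha> \<beta> \<and> is_tangent (jac f l) \<alpha> \<beta>)" for \<alpha> \<beta>
  proof
    assume tangents: "is_tangent l \<alpha> \<beta> \<and> is_tangent (jac f l) \<alpha> \<beta>"
    then obtain c where "c \<noteq> 0" and l_lin: "l 1 0 = c * \<alpha>" "l 0 1 = c * \<beta>"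
      using tangent_of_order_one \<open>ps_ord l = 1\<close> by blast
    obtain m where ord_f: "ps_ord f = Suc m"
      using ps_ord_nonzero_coeff[OF \<open>f \<noteq> ps_zero\<close>] \<open>f 0 0 = 0\<close> by (metis add_is_0 not0_implies_Suc)
    have f_low: "\<And>a b. a + b < Suc m \<Longrightarrow> f a b = 0"
      using coeff_below_ps_ord ord_f by metis
    have "homog_eval (Suc m) f \<beta> (-\<alpha>) \<noteq> 0"
      using \<open>transverse l f\<close> tangents \<open>f \<noteq> ps_zero\<close> ord_f
      unfolding transverse_def is_tangent_iff_homog_eval by auto
    moreover have "homog_eval m (jac f l) \<beta> (-\<alpha>) =
        c * homog_eval m (\<lambda>i j. \<beta> * ps_dX f i j + (-\<alpha>) * ps_dY f i j) \<beta> (-\<alpha>)"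
      unfolding homog_eval_def sum_distrib_left
      by (intro sum.cong refl) (simp add: jac_coeff_below_order[OF f_low] l_lin[unfolded One_nat_def] algebra_simps)
    ultimately have J_val: "homog_eval m (jac f l) \<beta> (-\<alpha>) \<noteq> 0"
      using \<open>c \<noteq> 0\<close> by (simp only: homog_eval_euler) (simp del: of_nat_Suc)
    moreover have "ps_ord (jac f l) = m"
      using J_val jac_coeff_below_order[OF f_low] by (intro ps_ord_eq_homog_eval) auto
    ultimately show False
      using tangents unfolding is_tangent_iff_homog_eval by simp
  qed
  then show ?thesis unfolding transverse_def by blast
qed

end
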